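(* In the DID setting of the context with $N_1=1$ (single treated unit, indexed $1$), suppose Assumption 1 holds. Consider testing $H_0:\alpha=\alpha_0$ at level $\tau\in(0,1)$ by rejecting when $\widehat\alpha-\alpha_0$ is below the $\tau/2$-quantile or above the $1-\tau/2$-quantile of the empirical distribution $\widehat F$ of the control residuals $\{\widehat W_i\}_{i\in\mathcal I_0}$. Then, under $H_0$, the rejection probability converges to $\tau$ as $N_0\to\infty$ (the test is asymptotically valid), even though the errors may be spatially correlated.
   Context: Units $i\in\mathcal I_1$ (treated, $|\mathcal I_1|=N_1$) and $i\in\mathcal I_0$ (control, $|\mathcal I_0|=N_0$), periods $t=1,\dots,T$; $\mathcal T_0=\{1,\dots,t^\ast\}$, $\mathcal T_1=\{t^\ast+1,\dots,T\}$, $T$ fixed. Potential outcomes: $Y_{it}(0)=\theta_i+\gamma_t+\eta_{it}$, $Y_{it}(1)=\alpha_{it}+Y_{it}(0)$; observed $Y_{it}=Y_{it}(1)$ if $i\in\mathcal I_1,t\in\mathcal T_1$, else $Y_{it}(0)$. The $\alpha_{it}$ are fixed and $\alpha=\frac{1}{N_1}\frac{1}{T-t^\ast}\sum_{i\in\mathcal I_1}\sum_{t\in\mathcal T_1}\alpha_{it}$. For a sequence $A_t$, $\nabla A=\frac{1}{T-t^\ast}\sum_{t\in\mathcal T_1}A_t-\frac{1}{t^\ast}\sum_{t\in\mathcal T_0}A_t$; $W_i=\nabla\eta_{i\cdot}$. $\widehat\alpha=\frac{1}{N_1}\sum_{i\in\mathcal I_1}\nabla Y_i-\frac{1}{N_0}\sum_{i\in\mathcal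 I_0}\nabla Y_i$; control residuals $\widehat W_i=\nabla Y_i-\frac1{N_0}\sum_{j\in\mathcal I_0}\nabla Y_j$; $\widehat F(c)=N_0^{-1}\sum_{i\in\mathcal I_0}\mathbbm 1\{\widehat W_i\le c\}$. Treatment assignment is fixed. Assumption 1: (i) $\mathbb E[W_i]=0$ for all $i$; (ii) all $W_i$ have the same marginal distribution, with continuous cdf $F$ and finite second moment; (iii) as $N_0\to\infty$, $\frac1{N_0}\sum_{i\in\mathcal I_0}W_i\xrightarrow{p}0$ and $\frac1{N_0}\sum_{i\in\mathcal I_0}\mathbbm 1\{W_i\le c\}\xrightarrow{p}F(c)$ for each $c$. *)

theory Defs
  imports "HOL-Probability.Probability"
begin

definition nabla :: "nat \<Rightarrow> nat \<Rightarrow> (nat \<Rightarrow> real) \<Rightarrow> real" where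
  "nabla T tstar A =
     (\<Sum>t\<in>{tstar<..T}. A t) / real (T - tstar) - (\<Sum>t\<in>{1..tstar}. A t) / real tstar"

text \<open>Observed outcome with a single treated unit (index 0) and control units 1..n.
  Y(0) = theta_i + gamma_t + eta_it, Y(1) = alpha_it + Y(0).\<close>
definition Yobs :: "nat \<Rightarrow> (nat \<Rightarrow> real) \<Rightarrow> real \<Rightarrow> real \<Rightarrow> real \<Rightarrow> nat \<Rightarrow> nat \<Rightarrow> real" where
  "Yobs tstar a th ga et i t = (if i = 0 \<and> tstar < t then a t + th + ga + et else th + ga + et)"

definition emp_cdf :: "nat \<Rightarrow> (nat \<Rightarrow> real) \<Rightarrow> real \<Rightarrow> real" where
  "emp_cdf n x c = real (card {i\<in>{1..n}. x i \<le> c}) / real n"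

definition emp_quantile :: "nat \<Rightarrow> (nat \<Rightarrow> real) \<Rightarrow> real \<Rightarrow> real" where
  "emp_quantile n x p = Inf {c. p \<le> emp_cdf n x c}"

definition conv_in_prob :: "'a measure \<Rightarrow> (nat \<Rightarrow> 'a \<Rightarrow> real) \<Rightarrow> real \<Rightarrow> bool" where
  "conv_in_prob M X c \<longleftrightarrow>
     (\<forall>e>0. (\<lambda>n. measure M {\<omega>\<in>space M. e < \<bar>X n \<omega> - c\<bar>}) \<longlonglongrightarrow> 0)"

end

theory Submission
  imports Defs
begin

text \<open>Under \<open>H\<^sub>0\<close> the centred estimate and the control residuals are shifted by the same
  estimate \<open>m\<close> of the control mean: \<open>alphahat - alpha0 = W 0 - m\<close> and \<open>What i = W i - m\<close>.
  Hence the test is exactly the rank test that rejects when the empirical cdf \<open>F\<^sub>n\<close> of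
  \<open>W 1, \<dots>, W n\<close> satisfies \<open>F\<^sub>n (W 0) < \<tau>/2\<close>, or when the proportion of the \<open>W i\<close> strictly below
  \<open>W 0\<close> is at least \<open>1 - \<tau>/2\<close>. Since \<open>F\<^sub>n\<close>
  is monotone and converges pointwise in probability to the continuous cdf \<open>F\<close> of \<open>W 0\<close>,
  \<open>P(F\<^sub>n (W 0) < p) \<rightarrow> P(F (W 0) < p) = p\<close>, however \<open>W 0\<close> depends on the controls.\<close>

definition emp_cdf_less :: "nat \<Rightarrow> (nat \<Rightarrow> real) \<Rightarrow> real \<Rightarrow> real" where
  "emp_cdf_less n x c = real (card {i\<in>{1..n}. x i < c}) / real n"

lemma card_filter_eq_sum_indicator:
  "finite A \<Longrightarrow> real (card {i\<in>A. P i}) = (\<Sum>i\<in>A. if P i then 1 else 0)"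
  using sum.inter_filter[of A "\<lambda>_. 1::real" P] by simp

lemma emp_cdf_eq_sum: "emp_cdf n x c = (\<Sum>i\<in>{1..n}. if x i \<le> c then 1 else 0) / real n"
  unfolding emp_cdf_def by (subst card_filter_eq_sum_indicator) auto

lemma emp_cdf_less_eq_sum: "emp_cdf_less n x c = (\<Sum>i\<in>{1..n}. if x i < c then 1 else 0) / real n"
  unfolding emp_cdf_less_def by (subst card_filter_eq_sum_indicator) auto

lemma emp_cdf_mono: "mono (emp_cdf n x)"
  unfolding emp_cdf_def mono_def by (auto intro!: divide_right_mono card_mono)

lemma emp_cdf_less_mono: "mono (emp_cdf_less n x)"
  unfolding emp_cdf_less_def mono_def by (auto intro!: divide_right_mono card_mono)

lemma emp_cdf_less_le_emp_cdf: "c \<le> d \<Longrightarrow> emp_cdf_less n x c \<le> emp_cdf n x d"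
  unfolding emp_cdf_def emp_cdf_less_def by (auto intro!: divide_right_mono card_mono)

lemma emp_cdf_le_emp_cdf_less: "c < d \<Longrightarrow> emp_cdf n x c \<le> emp_cdf_less n x d"
  unfolding emp_cdf_def emp_cdf_less_def by (auto intro!: divide_right_mono card_mono)

lemma emp_cdf_shift: "emp_cdf n (\<lambda>i. x i - m) c = emp_cdf n x (c + m)"
  unfolding emp_cdf_def by (simp add: algebra_simps)

lemma emp_cdf_cong: "(\<And>i. i \<in> {1..n} \<Longrightarrow> x i = y i) \<Longrightarrow> emp_cdf n x = emp_cdf n y"
  unfolding emp_cdf_def by (intro ext arg_cong[where f="\<lambda>A. real (card A) / real n"]) auto

lemma emp_quantile_cong:
  "(\<And>i. i \<in> {1..n} \<Longrightarrow> x i = y i) \<Longrightarrow> emp_quantile n x p = emp_quantile n y p"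
  unfolding emp_quantile_def by (subst emp_cdf_cong[of n x y]) auto

lemma emp_cdf_eq_one:
  assumes "1 \<le> n" "\<And>i. i \<in> {1..n} \<Longrightarrow> x i \<le> c"
  shows "emp_cdf n x c = 1"
proof -
  have "{i\<in>{1..n}. x i \<le> c} = {1..n}" using assms(2) by auto
  with assms(1) show ?thesis by (simp add: emp_cdf_def)
qed

lemma emp_cdf_attained_at_sample:
  assumes "0 < emp_cdf n x c"
  shows "\<exists>i\<in>{1..n}. x i \<le> c \<and> emp_cdf n x (x i) = emp_cdf n x c"
proof -
  define J where "J = {i\<in>{1..n}. x i \<le> c}"
  have "J \<noteq> {}"
  proof
    assume "J = {}"
    then have "emp_cdf n x c = 0" by (simp add: emp_cdf_def J_def)
    with assms show False by simp
  qed
  moreover have "finite J" by (simp add: J_def)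
  ultimately have "Max (x ` J) \<in> x ` J" by simp
  then obtain j where j: "j \<in> J" "x j = Max (x ` J)" by auto
  have "{i\<in>{1..n}. x i \<le> x j} = J"
    using j \<open>finite J\<close> by (auto simp: J_def)
  then show ?thesis using j unfolding emp_cdf_def J_def by (intro bexI[of _ j]) auto
qed

lemma emp_quantile_le_iff:
  assumes "1 \<le> n" "0 < p" "p \<le> 1"
  shows "emp_quantile n x p \<le> c \<longleftrightarrow> p \<le> emp_cdf n x c"
proof -
  define K where "K = {x i |i. i \<in> {1..n} \<and> p \<le> emp_cdf n x (x i)}"
  have below: "\<exists>k\<in>K. k \<le> d" if "p \<le> emp_cdf n x d" for d
    using emp_cdf_attained_at_sample[of n x d] that assms(2) by (fastforce simp: K_def)
  have "finite K" by (simp add: K_def)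
  have "K \<noteq> {}"
    using below[of "Max (x ` {1..n})"] emp_cdf_eq_one[OF assms(1), of x "Max (x ` {1..n})"] assms
    by auto
  have "{d. p \<le> emp_cdf n x d} = {Min K..}"
  proof (intro set_eqI iffI)
    fix d assume "d \<in> {d. p \<le> emp_cdf n x d}"
    then obtain k where "k \<in> K" "k \<le> d" using below by blast
    then show "d \<in> {Min K..}" using Min_le[OF \<open>finite K\<close>] by force
  next
    fix d assume "d \<in> {Min K..}"
    moreover have "p \<le> emp_cdf n x (Min K)"
      using Min_in[OF \<open>finite K\<close> \<open>K \<noteq> {}\<close>] by (auto simp: K_def)
    ultimately show "d \<in> {d. p \<le> emp_cdf n x d}"
      using emp_cdf_mono[of n x] by (auto simp: mono_def intro: order_trans)
  qed
  then show ?thesis by (auto simp: emp_quantile_def)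
qed

lemma emp_quantile_less_iff:
  assumes "1 \<le> n" "0 < p" "p \<le> 1"
  shows "emp_quantile n x p < c \<longleftrightarrow> p \<le> emp_cdf_less n x c"
proof
  assume "emp_quantile n x p < c"
  then show "p \<le> emp_cdf_less n x c"
    using emp_quantile_le_iff[OF assms, of x "emp_quantile n x p"] emp_cdf_le_emp_cdf_less
    by (meson order.refl order_trans)
next
  assume p_le: "p \<le> emp_cdf_less n x c"
  define d where "d = Max (insert (c - 1) {x i |i. i \<in> {1..n} \<and> x i < c})"
  have "d < c" by (auto simp: d_def)
  have "{i\<in>{1..n}. x i < c} \<subseteq> {i\<in>{1..n}. x i \<le> d}"
    by (auto simp: d_def intro: Max_ge)
  then have "emp_cdf_less n x c \<le> emp_cdf n x d"
    unfolding emp_cdf_def emp_cdf_less_def by (intro divide_right_mono of_nat_mono card_mono) simp_all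
  then have "emp_quantile n x p \<le> d"
    using emp_quantile_le_iff[OF assms] p_le by simp
  with \<open>d < c\<close> show "emp_quantile n x p < c" by simp
qed

lemma emp_quantile_shift:
  assumes "1 \<le> n" "0 < p" "p \<le> 1"
  shows "emp_quantile n (\<lambda>i. x i - m) p = emp_quantile n x p - m"
proof -
  have "emp_quantile n (\<lambda>i. x i - m) p \<le> c \<longleftrightarrow> emp_quantile n x p - m \<le> c" for c
    using emp_quantile_le_iff[OF assms] by (simp add: emp_cdf_shift algebra_simps)
  from this[of "emp_quantile n x p - m"] this[of "emp_quantile n (\<lambda>i. x i - m) p"]
  show ?thesis by linarith
qed

lemma emp_quantile_test_shift_invariant:
  assumes "1 \<le> n" "0 < p" "p \<le> 1" and y: "\<And>i. i \<in> {1..n} \<Longrightarrow> y i = x i - m"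
  shows "z - m < emp_quantile n y p \<longleftrightarrow> emp_cdf n x z < p"
    and "emp_quantile n y p < z - m \<longleftrightarrow> p \<le> emp_cdf_less n x z"
proof -
  have "emp_quantile n y p = emp_quantile n x p - m"
    using emp_quantile_cong[of n y "\<lambda>i. x i - m", OF y] emp_quantile_shift[OF assms(1-3)] by simp
  then show "z - m < emp_quantile n y p \<longleftrightarrow> emp_cdf n x z < p"
    and "emp_quantile n y p < z - m \<longleftrightarrow> p \<le> emp_cdf_less n x z"
    using emp_quantile_le_iff[OF assms(1-3)] emp_quantile_less_iff[OF assms(1-3)]
    by (simp_all add: not_le[symmetric])
qed

lemma borel_measurable_emp_cdf:
  assumes "\<And>i. i \<in> {1..n} \<Longrightarrow> X i \<in> borel_measurable M" and [measurable]: "c \<in> borel_measurable M"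
  shows "(\<lambda>\<omega>. emp_cdf n (\<lambda>i. X i \<omega>) (c \<omega>)) \<in> borel_measurable M"
proof -
  have "(\<lambda>\<omega>. if X i \<omega> \<le> c \<omega> then 1 else 0::real) \<in> borel_measurable M" if "i \<in> {1..n}" for i
    using assms(1)[OF that] by measurable
  then show ?thesis unfolding emp_cdf_eq_sum by measurable
qed

lemma borel_measurable_emp_cdf_less:
  assumes "\<And>i. i \<in> {1..n} \<Longrightarrow> X i \<in> borel_measurable M" and [measurable]: "c \<in> borel_measurable M"
  shows "(\<lambda>\<omega>. emp_cdf_less n (\<lambda>i. X i \<omega>) (c \<omega>)) \<in> borel_measurable M"
proof -
  have "(\<lambda>\<omega>. if X i \<omega> < c \<omega> then 1 else 0::real) \<in> borel_measurable M" if "i \<in> {1..n}" for i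
    using assms(1)[OF that] by measurable
  then show ?thesis unfolding emp_cdf_less_eq_sum by measurable
qed

lemma (in prob_space) continuous_cdf_attains:
  fixes Z :: "'a \<Rightarrow> real"
  assumes [measurable]: "Z \<in> borel_measurable M"
    and cdf: "\<And>c. prob {\<omega>\<in>space M. Z \<omega> \<le> c} = F c"
    and "continuous_on UNIV F" "0 < y" "y < 1"
  shows "\<exists>c. F c = y"
proof -
  interpret Z: real_distribution "distr M borel Z" by simp
  have "F = cdf (distr M borel Z)"
    by (auto simp: cdf_def measure_distr cdf[symmetric] vimage_def Int_def conj_commute)
  then have "(F \<longlongrightarrow> 0) at_bot" "(F \<longlongrightarrow> 1) at_top"
    using Z.cdf_lim_at_bot Z.cdf_lim_at_top_prob by simp_all
  then have "eventually (\<lambda>x. F x < y) at_bot" "eventually (\<lambda>x. y < F x) at_top"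
    using \<open>0 < y\<close> \<open>y < 1\<close> by (auto dest: order_tendstoD)
  then obtain a b where "F a < y" "\<And>x. b \<le> x \<Longrightarrow> y < F x"
    unfolding eventually_at_bot_linorder eventually_at_top_linorder by blast
  then have "F a \<le> y" "y \<le> F (max a b)" by (simp_all add: less_imp_le)
  then show ?thesis
    using IVT'[of F a y "max a b"] continuous_on_subset[OF \<open>continuous_on UNIV F\<close>] by auto
qed

lemma (in finite_measure) finite_measure_subset_Un_le:
  "A \<subseteq> B \<union> C \<Longrightarrow> B \<in> sets M \<Longrightarrow> C \<in> sets M \<Longrightarrow> measure M A \<le> measure M B + measure M C"
  by (meson finite_measure_mono measure_Un_le order_trans sets.Un)

lemma (in prob_space) prob_less_at_random_point_tendsto:
  fixes H :: "nat \<Rightarrow> 'a \<Rightarrow> real \<Rightarrow> real" and Z :: "nat \<Rightarrow> 'a \<Rightarrow> real"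
  assumes H_mono: "\<And>n \<omega>. mono (H n \<omega>)"
    and H_meas: "\<And>n c. (\<lambda>\<omega>. H n \<omega> c) \<in> borel_measurable M"
    and H_conv: "\<And>c. conv_in_prob M (\<lambda>n \<omega>. H n \<omega> c) (F c)"
    and Z_meas [measurable]: "\<And>n. Z n \<in> borel_measurable M"
    and Z_cdf: "\<And>n c. prob {\<omega>\<in>space M. Z n \<omega> \<le> c} = F c"
    and F_cont: "continuous_on UNIV F"
    and event: "\<And>n. {\<omega>\<in>space M. H n \<omega> (Z n \<omega>) < p} \<in> events"
    and p: "0 < p" "p < 1"
  shows "(\<lambda>n. prob {\<omega>\<in>space M. H n \<omega> (Z n \<omega>) < p}) \<longlonglongrightarrow> p"
proof (rule tendstoI)
  fix \<delta> :: real assume "0 < \<delta>"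
  define \<epsilon> where "\<epsilon> = min \<delta> (min p (1 - p)) / 8"
  have "0 < \<epsilon>" "\<epsilon> \<le> \<delta>/8" "\<epsilon> \<le> p/8" "\<epsilon> \<le> (1 - p)/8"
    using p \<open>0 < \<delta>\<close> by (simp_all add: \<epsilon>_def)
  then have \<epsilon>: "0 < \<epsilon>" "3 * \<epsilon> < \<delta>" "0 < p - 2 * \<epsilon>" "p + 2 * \<epsilon> < 1"
    using p by auto
  obtain lo where lo: "F lo = p - 2 * \<epsilon>"
    using continuous_cdf_attains[OF Z_meas Z_cdf F_cont, of "p - 2 * \<epsilon>"] \<epsilon> p by auto
  obtain hi where hi: "F hi = p + 2 * \<epsilon>"
    using continuous_cdf_attains[OF Z_meas Z_cdf F_cont, of "p + 2 * \<epsilon>"] \<epsilon> p by auto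
  \<comment> \<open>by monotonicity, closeness to \<open>F\<close> at the fixed points \<open>lo\<close>, \<open>hi\<close> controls \<open>H n \<omega> (Z n \<omega>)\<close>\<close>
  define bad where "bad n c = {\<omega>\<in>space M. \<epsilon> < \<bar>H n \<omega> c - F c\<bar>}" for n c
  have bad_events: "bad n c \<in> events" for n c
    using H_meas[of n c] unfolding bad_def by measurable
  have "eventually (\<lambda>n. prob (bad n lo) < \<epsilon> \<and> prob (bad n hi) < \<epsilon>) sequentially"
    using H_conv[of lo] H_conv[of hi] \<open>0 < \<epsilon>\<close> unfolding conv_in_prob_def bad_def
    by (intro eventually_conj order_tendstoD(2)) simp_all
  then show "eventually (\<lambda>n. dist (prob {\<omega>\<in>space M. H n \<omega> (Z n \<omega>) < p}) p < \<delta>) sequentially"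
  proof eventually_elim
    case (elim n)
    let ?R = "{\<omega>\<in>space M. H n \<omega> (Z n \<omega>) < p}"
    have Z_events: "{\<omega>\<in>space M. Z n \<omega> \<le> c} \<in> events" for c by measurable
    have "?R \<subseteq> {\<omega>\<in>space M. Z n \<omega> \<le> hi} \<union> bad n hi"
    proof
      fix \<omega> assume \<omega>: "\<omega> \<in> ?R"
      then have "H n \<omega> (Z n \<omega>) < p" by simp
      show "\<omega> \<in> {\<omega>\<in>space M. Z n \<omega> \<le> hi} \<union> bad n hi"
      proof (cases "Z n \<omega> \<le> hi")
        case False
        then have "H n \<omega> hi \<le> H n \<omega> (Z n \<omega>)"
          using monoD[OF H_mono] by simp
        then have "\<epsilon> < \<bar>H n \<omega> hi - F hi\<bar>"
          using \<open>H n \<omega> (Z n \<omega>) < p\<close> hi \<epsilon> by arith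
        with \<omega> show ?thesis by (simp add: bad_def)
      qed (use \<omega> in simp)
    qed
    then have "prob ?R \<le> prob {\<omega>\<in>space M. Z n \<omega> \<le> hi} + prob (bad n hi)"
      by (rule finite_measure_subset_Un_le[OF _ Z_events bad_events])
    then have upper: "prob ?R \<le> F hi + prob (bad n hi)"
      by (simp add: Z_cdf)
    have "{\<omega>\<in>space M. Z n \<omega> \<le> lo} \<subseteq> ?R \<union> bad n lo"
    proof
      fix \<omega> assume \<omega>: "\<omega> \<in> {\<omega>\<in>space M. Z n \<omega> \<le> lo}"
      then have "H n \<omega> (Z n \<omega>) \<le> H n \<omega> lo"
        using monoD[OF H_mono] by simp
      then have "H n \<omega> (Z n \<omega>) < p \<or> \<epsilon> < \<bar>H n \<omega> lo - F lo\<bar>"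
        using lo \<epsilon> by arith
      then show "\<omega> \<in> ?R \<union> bad n lo"
        using \<omega> by (auto simp: bad_def)
    qed
    then have "prob {\<omega>\<in>space M. Z n \<omega> \<le> lo} \<le> prob ?R + prob (bad n lo)"
      by (rule finite_measure_subset_Un_le[OF _ event bad_events])
    then have lower: "F lo \<le> prob ?R + prob (bad n lo)"
      by (simp add: Z_cdf)
    have "p - \<delta> < prob ?R" "prob ?R < p + \<delta>"
      using upper lower elim lo hi \<epsilon> by linarith+
    then show ?case
      by (simp add: dist_real_def abs_less_iff)
  qed
qed

lemma (in prob_space) conv_in_prob_emp_cdf_less:
  assumes X_meas: "\<And>n i. i \<in> {1..n} \<Longrightarrow> X n i \<in> borel_measurable M"
    and conv: "\<And>c. conv_in_prob M (\<lambda>n \<omega>. emp_cdf n (\<lambda>i. X n i \<omega>) c) (F c)"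
    and F_cont: "continuous_on UNIV F"
  shows "conv_in_prob M (\<lambda>n \<omega>. emp_cdf_less n (\<lambda>i. X n i \<omega>) c) (F c)"
  unfolding conv_in_prob_def
proof (intro allI impI)
  fix e :: real assume "0 < e"
  obtain d where "0 < d" and d: "\<bar>F (c - d) - F c\<bar> < e/2"
  proof -
    obtain d where "0 < d" "\<And>x. dist x c < d \<Longrightarrow> dist (F x) (F c) < e/2"
      using F_cont \<open>0 < e\<close> unfolding continuous_on_iff by (metis UNIV_I half_gt_zero)
    then show thesis
      using that[of "d/2"] by (simp add: dist_real_def)
  qed
  \<comment> \<open>\<open>emp_cdf_less n x c\<close> lies between \<open>emp_cdf n x (c - d)\<close> and \<open>emp_cdf n x c\<close>\<close>
  define dev where "dev n c' = {\<omega>\<in>space M. e/2 < \<bar>emp_cdf n (\<lambda>i. X n i \<omega>) c' - F c'\<bar>}" for n c'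
  have dev_events: "dev n c' \<in> events" for n c'
  proof -
    have [measurable]: "(\<lambda>\<omega>. emp_cdf n (\<lambda>i. X n i \<omega>) c') \<in> borel_measurable M"
      using borel_measurable_emp_cdf[OF X_meas, where c="\<lambda>_. c'"] by simp
    show ?thesis unfolding dev_def by measurable
  qed
  have cover: "{\<omega>\<in>space M. e < \<bar>emp_cdf_less n (\<lambda>i. X n i \<omega>) c - F c\<bar>} \<subseteq> dev n c \<union> dev n (c - d)"
    for n
  proof
    fix \<omega> assume \<omega>: "\<omega> \<in> {\<omega>\<in>space M. e < \<bar>emp_cdf_less n (\<lambda>i. X n i \<omega>) c - F c\<bar>}"
    have mono: "emp_cdf n (\<lambda>i. X n i \<omega>) (c - d) \<le> emp_cdf_less n (\<lambda>i. X n i \<omega>) c"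
      "emp_cdf_less n (\<lambda>i. X n i \<omega>) c \<le> emp_cdf n (\<lambda>i. X n i \<omega>) c"
      using \<open>0 < d\<close> by (simp_all add: emp_cdf_le_emp_cdf_less emp_cdf_less_le_emp_cdf)
    show "\<omega> \<in> dev n c \<union> dev n (c - d)"
    proof (rule ccontr)
      assume "\<omega> \<notin> dev n c \<union> dev n (c - d)"
      then have "\<bar>emp_cdf n (\<lambda>i. X n i \<omega>) c - F c\<bar> \<le> e/2"
        "\<bar>emp_cdf n (\<lambda>i. X n i \<omega>) (c - d) - F (c - d)\<bar> \<le> e/2"
        using \<omega> by (auto simp: dev_def)
      then have "\<bar>emp_cdf_less n (\<lambda>i. X n i \<omega>) c - F c\<bar> \<le> e"
        using mono d unfolding abs_le_iff abs_less_iff by (intro conjI; linarith)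
      with \<omega> show False by simp
    qed
  qed
  have "(\<lambda>n. prob (dev n c')) \<longlonglongrightarrow> 0" for c'
    using conv[of c', unfolded conv_in_prob_def, rule_format, of "e/2"] \<open>0 < e\<close>
    unfolding dev_def by simp
  then have lim: "(\<lambda>n. prob (dev n c) + prob (dev n (c - d))) \<longlonglongrightarrow> 0"
    using tendsto_add[of "\<lambda>n. prob (dev n c)" 0 _ "\<lambda>n. prob (dev n (c - d))" 0] by simp
  show "(\<lambda>n. prob {\<omega>\<in>space M. e < \<bar>emp_cdf_less n (\<lambda>i. X n i \<omega>) c - F c\<bar>}) \<longlonglongrightarrow> 0"
  proof (rule tendsto_sandwich[OF _ _ tendsto_const lim])
    show "\<forall>\<^sub>F n in sequentially. prob {\<omega>\<in>space M. e < \<bar>emp_cdf_less n (\<lambda>i. X n i \<omega>) c - F c\<bar>}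
        \<le> prob (dev n c) + prob (dev n (c - d))"
      using finite_measure_subset_Un_le[OF cover dev_events dev_events] by (intro always_eventually allI)
  qed simp
qed

lemma (in prob_space) rank_test_rejection_prob_tendsto:
  fixes X :: "nat \<Rightarrow> nat \<Rightarrow> 'a \<Rightarrow> real" and Z :: "nat \<Rightarrow> 'a \<Rightarrow> real"
  assumes X_meas: "\<And>n i. i \<in> {1..n} \<Longrightarrow> X n i \<in> borel_measurable M"
    and Z_meas: "\<And>n. Z n \<in> borel_measurable M"
    and Z_cdf: "\<And>n c. prob {\<omega>\<in>space M. Z n \<omega> \<le> c} = F c"
    and F_cont: "continuous_on UNIV F"
    and conv: "\<And>c. conv_in_prob M (\<lambda>n \<omega>. emp_cdf n (\<lambda>i. X n i \<omega>) c) (F c)"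
    and pq: "0 < p" "p < q" "q < 1"
  shows "(\<lambda>n. prob {\<omega>\<in>space M. emp_cdf n (\<lambda>i. X n i \<omega>) (Z n \<omega>) < p
                                \<or> q \<le> emp_cdf_less n (\<lambda>i. X n i \<omega>) (Z n \<omega>)})
         \<longlonglongrightarrow> p + (1 - q)"
proof -
  define A where "A n = {\<omega>\<in>space M. emp_cdf n (\<lambda>i. X n i \<omega>) (Z n \<omega>) < p}" for n
  define B where "B n = {\<omega>\<in>space M. emp_cdf_less n (\<lambda>i. X n i \<omega>) (Z n \<omega>) < q}" for n
  have [measurable]: "(\<lambda>\<omega>. emp_cdf n (\<lambda>i. X n i \<omega>) (Z n \<omega>)) \<in> borel_measurable M"
    "(\<lambda>\<omega>. emp_cdf_less n (\<lambda>i. X n i \<omega>) (Z n \<omega>)) \<in> borel_measurable M" for n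
    using borel_measurable_emp_cdf[OF X_meas Z_meas] borel_measurable_emp_cdf_less[OF X_meas Z_meas]
    by auto
  have events: "A n \<in> events" "B n \<in> events" for n
    unfolding A_def B_def by measurable
  have "(\<lambda>n. prob (A n)) \<longlonglongrightarrow> p"
    unfolding A_def
  proof (rule prob_less_at_random_point_tendsto[OF emp_cdf_mono _ conv Z_meas Z_cdf F_cont])
    show "(\<lambda>\<omega>. emp_cdf n (\<lambda>i. X n i \<omega>) c) \<in> borel_measurable M" for n c
      using borel_measurable_emp_cdf[OF X_meas, where c="\<lambda>_. c"] by auto
  qed (use events pq in \<open>auto simp: A_def\<close>)
  moreover have "(\<lambda>n. prob (B n)) \<longlonglongrightarrow> q"
    unfolding B_def
  proof (rule prob_less_at_random_point_tendsto[OF emp_cdf_less_mono _ _ Z_meas Z_cdf F_cont])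
    show "(\<lambda>\<omega>. emp_cdf_less n (\<lambda>i. X n i \<omega>) c) \<in> borel_measurable M" for n c
      using borel_measurable_emp_cdf_less[OF X_meas, where c="\<lambda>_. c"] by auto
    show "conv_in_prob M (\<lambda>n \<omega>. emp_cdf_less n (\<lambda>i. X n i \<omega>) c) (F c)" for c
      by (rule conv_in_prob_emp_cdf_less[OF X_meas conv F_cont])
  qed (use events pq in \<open>auto simp: B_def\<close>)
  ultimately have "(\<lambda>n. prob (A n) + (1 - prob (B n))) \<longlonglongrightarrow> p + (1 - q)"
    by (intro tendsto_intros)
  moreover have "{\<omega>\<in>space M. emp_cdf n (\<lambda>i. X n i \<omega>) (Z n \<omega>) < p
                   \<or> q \<le> emp_cdf_less n (\<lambda>i. X n i \<omega>) (Z n \<omega>)} = A n \<union> (space M - B n)"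
    for n by (auto simp: A_def B_def)
  moreover have "prob (A n \<union> (space M - B n)) = prob (A n) + (1 - prob (B n))" for n
  proof -
    have "A n \<subseteq> B n"
    proof
      fix \<omega> assume "\<omega> \<in> A n"
      moreover have "emp_cdf_less n (\<lambda>i. X n i \<omega>) (Z n \<omega>) \<le> emp_cdf n (\<lambda>i. X n i \<omega>) (Z n \<omega>)"
        by (rule emp_cdf_less_le_emp_cdf) simp
      ultimately show "\<omega> \<in> B n"
        using pq unfolding A_def B_def by simp
    qed
    then have "A n \<inter> (space M - B n) = {}" by blast
    then show ?thesis
      using finite_measure_Union[OF events(1) _] prob_compl[OF events(2)] events by simp
  qed
  ultimately show ?thesis by simp
qed

lemma nabla_add: "nabla T ts (\<lambda>t. f t + g t) = nabla T ts f + nabla T ts g"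
  by (simp add: nabla_def sum.distrib add_divide_distrib)

lemma nabla_const: "1 \<le> ts \<Longrightarrow> ts < T \<Longrightarrow> nabla T ts (\<lambda>t. c) = 0"
  by (simp add: nabla_def)

lemma nabla_post_period:
  "nabla T ts (\<lambda>t. if ts < t then a t else 0) = (\<Sum>t\<in>{ts<..T}. a t) / real (T - ts)"
proof -
  have "(\<Sum>t\<in>{ts<..T}. if ts < t then a t else 0) = (\<Sum>t\<in>{ts<..T}. a t)"
    by (rule sum.cong) auto
  moreover have "(\<Sum>t\<in>{1..ts}. if ts < t then a t else 0) = (0::real)"
    by (rule sum.neutral) auto
  ultimately show ?thesis by (simp add: nabla_def)
qed

lemma nabla_Yobs:
  assumes "1 \<le> ts" "ts < T"
  shows "nabla T ts (\<lambda>t. Yobs ts a th (g t) (e t) i t)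
    = (if i = 0 then (\<Sum>t\<in>{ts<..T}. a t) / real (T - ts) else 0) + nabla T ts g + nabla T ts e"
proof -
  have "(\<lambda>t. Yobs ts a th (g t) (e t) i t)
      = (\<lambda>t. (if i = 0 then (if ts < t then a t else 0) else 0) + ((th + g t) + e t))"
    by (auto simp: Yobs_def)
  then show ?thesis
    by (simp add: nabla_add nabla_const[OF assms] nabla_post_period)
qed

lemma difference_in_means_centering:
  fixes U w :: "nat \<Rightarrow> real"
  assumes "1 \<le> n" and U: "\<And>i. U i = (if i = 0 then \<alpha> else 0) + g + w i"
  shows "U 0 - (\<Sum>j\<in>{1..n}. U j) / real n - \<alpha> = w 0 - (\<Sum>j\<in>{1..n}. w j) / real n"
    and "i \<in> {1..n} \<Longrightarrow> U i - (\<Sum>j\<in>{1..n}. U j) / real n = w i - (\<Sum>j\<in>{1..n}. w j) / real n"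
proof -
  have "(\<Sum>j\<in>{1..n}. U j) = (\<Sum>j\<in>{1..n}. g + w j)"
    by (rule sum.cong) (simp_all add: U)
  then have "(\<Sum>j\<in>{1..n}. U j) / real n = g + (\<Sum>j\<in>{1..n}. w j) / real n"
    using assms(1) by (simp add: sum.distrib field_simps)
  then show "U 0 - (\<Sum>j\<in>{1..n}. U j) / real n - \<alpha> = w 0 - (\<Sum>j\<in>{1..n}. w j) / real n"
    and "i \<in> {1..n} \<Longrightarrow> U i - (\<Sum>j\<in>{1..n}. U j) / real n = w i - (\<Sum>j\<in>{1..n}. w j) / real n"
    by (simp_all add: U)
qed

theorem corollary1:
  fixes M :: "'a measure"
    and T tstar :: nat
    and eta :: "nat \<Rightarrow> nat \<Rightarrow> nat \<Rightarrow> 'a \<Rightarrow> real"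
    and theta :: "nat \<Rightarrow> nat \<Rightarrow> 'a \<Rightarrow> real"
    and gamma :: "nat \<Rightarrow> nat \<Rightarrow> 'a \<Rightarrow> real"
    and a :: "nat \<Rightarrow> real"
    and F :: "real \<Rightarrow> real"
    and alpha0 tau :: real
  defines "W \<equiv> \<lambda>n i \<omega>. nabla T tstar (\<lambda>t. eta n i t \<omega>)"
  defines "Y \<equiv> \<lambda>n i t \<omega>. Yobs tstar a (theta n i \<omega>) (gamma n t \<omega>) (eta n i t \<omega>) i t"
  defines "alphahat \<equiv> \<lambda>n \<omega>. nabla T tstar (\<lambda>t. Y n 0 t \<omega>)
             - (\<Sum>j\<in>{1..n}. nabla T tstar (\<lambda>t. Y n j t \<omega>)) / real n"
  defines "What \<equiv> \<lambda>n \<omega> i. nabla T tstar (\<lambda>t. Y n i t \<omega>)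
             - (\<Sum>j\<in>{1..n}. nabla T tstar (\<lambda>t. Y n j t \<omega>)) / real n"
  assumes M: "prob_space M"
    and tstar: "1 \<le> tstar" "tstar < T"
    and meas: "\<And>n i t. i \<le> n \<Longrightarrow> t \<in> {1..T} \<Longrightarrow> eta n i t \<in> borel_measurable M"
    \<comment> \<open>Assumption 1 (i): mean zero\<close>
    and A1_mean: "\<And>n i. i \<le> n \<Longrightarrow> integrable M (W n i) \<and> integral\<^sup>L M (W n i) = 0"
    \<comment> \<open>Assumption 1 (ii): common marginal distribution with continuous cdf F, finite 2nd moment\<close>
    and A1_cdf: "\<And>n i c. i \<le> n \<Longrightarrow> measure M {\<omega>\<in>space M. W n i \<omega> \<le> c} = F c"
    and A1_cont: "continuous_on UNIV F"
    and A1_sq: "\<And>n i. i \<le> n \<Longrightarrow> integrable M (\<lambda>\<omega>. (W n i \<omega>)\<^sup>2)"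
    \<comment> \<open>Assumption 1 (iii): LLN and pointwise empirical-cdf convergence over controls\<close>
    and A1_lln: "conv_in_prob M (\<lambda>n \<omega>. (\<Sum>i\<in>{1..n}. W n i \<omega>) / real n) 0"
    and A1_ecdf: "\<And>c. conv_in_prob M
                    (\<lambda>n \<omega>. (\<Sum>i\<in>{1..n}. if W n i \<omega> \<le> c then 1 else 0) / real n) (F c)"
    \<comment> \<open>null hypothesis and level\<close>
    and H0: "(\<Sum>t\<in>{tstar<..T}. a t) / real (T - tstar) = alpha0"
    and tau: "0 < tau" "tau < 1"
  shows "(\<lambda>n. measure M {\<omega>\<in>space M.
            alphahat n \<omega> - alpha0 < emp_quantile n (What n \<omega>) (tau / 2)
          \<or> alphahat n \<omega> - alpha0 > emp_quantile n (What n \<omega>) (1 - tau / 2)})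
         \<longlonglongrightarrow> tau"
proof -
  interpret prob_space M by (rule M)
  have nabla_Y: "nabla T tstar (\<lambda>t. Y n i t \<omega>)
      = (if i = 0 then alpha0 else 0) + nabla T tstar (\<lambda>t. gamma n t \<omega>) + W n i \<omega>" for n i \<omega>
    by (simp add: Y_def W_def nabla_Yobs[OF tstar] H0)
  \<comment> \<open>of the moment conditions only the measurability of \<open>W\<close> is used\<close>
  have W_meas: "W n i \<in> borel_measurable M" if "i \<le> n" for n i
    using A1_mean[OF that] by (auto intro: borel_measurable_integrable)
  let ?rank_test = "\<lambda>n. {\<omega>\<in>space M. emp_cdf n (\<lambda>i. W n i \<omega>) (W n 0 \<omega>) < tau / 2
                             \<or> 1 - tau / 2 \<le> emp_cdf_less n (\<lambda>i. W n i \<omega>) (W n 0 \<omega>)}"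
  have "(\<lambda>n. prob (?rank_test n)) \<longlonglongrightarrow> tau / 2 + (1 - (1 - tau / 2))"
    using A1_ecdf tau
    by (intro rank_test_rejection_prob_tendsto[where F = F])
       (auto intro: W_meas A1_cont A1_cdf simp: emp_cdf_eq_sum)
  then have lim: "(\<lambda>n. prob (?rank_test n)) \<longlonglongrightarrow> tau" by simp
  have "eventually (\<lambda>n. prob (?rank_test n)
      = prob {\<omega>\<in>space M. alphahat n \<omega> - alpha0 < emp_quantile n (What n \<omega>) (tau / 2)
          \<or> alphahat n \<omega> - alpha0 > emp_quantile n (What n \<omega>) (1 - tau / 2)}) sequentially"
    using eventually_ge_at_top[of 1]
  proof eventually_elim
    case (elim n)
    note centering = difference_in_means_centering[OF elim nabla_Y]
    show ?case
      unfolding alphahat_def What_def centering(1)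
      using emp_quantile_test_shift_invariant[OF elim _ _ centering(2)] tau
      by (intro arg_cong[where f = prob]) auto
  qed
  with lim show ?thesis
    by (rule Lim_transform_eventually)
qed

end
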